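(* Let $\mathcal{H}=\mathbb{C}^2$ and let $\mathcal{UE}$ be the set of unital entanglement breaking quantum channels on $\mathcal{L}(\mathcal{H})$. For every density operator $\tau$ on $\mathcal{H}\otimes\mathcal{H}$, $$C(\tau,\mathcal{UE})=\max_{\Psi\in\mathcal{UE}}\operatorname{tr}[\tau J_\Psi]\le\frac12\left(1+\|N(\tau)\|\right),$$ where $\|N(\tau)\|=\max_{\boldsymbol{x}\in\mathbb{R}^3,\|\boldsymbol{x}\|=1}\|N(\tau)\boldsymbol{x}\|$ is the operator norm induced by the Euclidean norm.
   Context: A quantum channel is a linear, completely positive, trace preserving map $\Psi:\mathcal{L}(\mathcal{H})\to\mathcal{L}(\mathcal{H})$; it is unital if $\Psi(I)=I$, and entanglement breaking if $(\mathrm{id}\otimes\Psi)(\rho)$ is separable for every density operator $\rho$ on $\mathcal{H}\otimes\mathcal{H}$. $\{|0\rangle,|1\rangle\}$ is the computational basis; $J_\Psi=(\mathrm{id}\otimes\Psi)(P'_+)$ with $P'_+=\sum_{i,j=0}^1|i\rangle\langle j|\otimes|i\rangle\langle j|$. The correlation matrix is $N(X)_{ij}=\operatorname{tr}[X(\sigma_i\otimes\sigma_j)]$, $i,j\in\{1,2,3\}$, with $\sigma_i$ the Pauli matrices. *)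

theory Defs
  imports Complex_Main "Jordan_Normal_Form.Matrix"
begin

text \<open>The tensor product C^n (x) C^m is identified with C^(n*m) via |a> (x) |k> = e_(a*m+k)
  (Kronecker product convention). A superoperator on L(C^2) is a HOL function on complex
  matrices; only its values on 2 x 2 matrices matter.\<close>

definition mtrace :: "complex mat \<Rightarrow> complex" where
  "mtrace A = (\<Sum>i<dim_row A. A $$ (i, i))"

definition kron :: "complex mat \<Rightarrow> complex mat \<Rightarrow> complex mat" where
  "kron A B = mat (dim_row A * dim_row B) (dim_col A * dim_col B)
     (\<lambda>(i, j). A $$ (i div dim_row B, j div dim_col B) * B $$ (i mod dim_row B, j mod dim_col B))"

definition psd :: "nat \<Rightarrow> complex mat \<Rightarrow> bool" where
  "psd d A \<longleftrightarrow> A \<in> carrier_mat d d \<and>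
     (\<forall>v :: nat \<Rightarrow> complex. let q = (\<Sum>i<d. \<Sum>j<d. cnj (v i) * A $$ (i, j) * v j)
        in Im q = 0 \<and> Re q \<ge> 0)"

definition density :: "nat \<Rightarrow> complex mat \<Rightarrow> bool" where
  "density d \<rho> \<longleftrightarrow> psd d \<rho> \<and> mtrace \<rho> = 1"

text \<open>The (a,b)-th 2 x 2 block of a (2n) x (2n) matrix X = sum_ab |a><b| (x) X_ab.\<close>
definition block2 :: "complex mat \<Rightarrow> nat \<Rightarrow> nat \<Rightarrow> complex mat" where
  "block2 X a b = mat 2 2 (\<lambda>(k, l). X $$ (2 * a + k, 2 * b + l))"

text \<open>(id_n (x) \<Psi>)(X) for X on C^n (x) C^2: applies \<Psi> blockwise.\<close>
definition id_tensor :: "nat \<Rightarrow> (complex mat \<Rightarrow> complex mat) \<Rightarrow> complex mat \<Rightarrow> complex mat" where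
  "id_tensor n \<Psi> X = mat (n * 2) (n * 2)
     (\<lambda>(i, j). \<Psi> (block2 X (i div 2) (j div 2)) $$ (i mod 2, j mod 2))"

definition linear_superop :: "(complex mat \<Rightarrow> complex mat) \<Rightarrow> bool" where
  "linear_superop \<Psi> \<longleftrightarrow>
     (\<forall>A \<in> carrier_mat 2 2. \<Psi> A \<in> carrier_mat 2 2) \<and>
     (\<forall>A \<in> carrier_mat 2 2. \<forall>B \<in> carrier_mat 2 2. \<Psi> (A + B) = \<Psi> A + \<Psi> B) \<and>
     (\<forall>A \<in> carrier_mat 2 2. \<forall>c. \<Psi> (c \<cdot>\<^sub>m A) = c \<cdot>\<^sub>m \<Psi> A)"

definition completely_positive :: "(complex mat \<Rightarrow> complex mat) \<Rightarrow> bool" where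
  "completely_positive \<Psi> \<longleftrightarrow>
     (\<forall>n. \<forall>X. psd (n * 2) X \<longrightarrow> psd (n * 2) (id_tensor n \<Psi> X))"

definition trace_preserving :: "(complex mat \<Rightarrow> complex mat) \<Rightarrow> bool" where
  "trace_preserving \<Psi> \<longleftrightarrow> (\<forall>A \<in> carrier_mat 2 2. mtrace (\<Psi> A) = mtrace A)"

definition quantum_channel :: "(complex mat \<Rightarrow> complex mat) \<Rightarrow> bool" where
  "quantum_channel \<Psi> \<longleftrightarrow> linear_superop \<Psi> \<and> completely_positive \<Psi> \<and> trace_preserving \<Psi>"

definition unital :: "(complex mat \<Rightarrow> complex mat) \<Rightarrow> bool" where
  "unital \<Psi> \<longleftrightarrow> \<Psi> (1\<^sub>m 2) = 1\<^sub>m 2"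

definition separable :: "complex mat \<Rightarrow> bool" where
  "separable \<rho> \<longleftrightarrow> \<rho> \<in> carrier_mat 4 4 \<and>
     (\<exists>(k::nat) (p :: nat \<Rightarrow> real) A B.
        (\<forall>l<k. p l \<ge> 0 \<and> density 2 (A l) \<and> density 2 (B l)) \<and>
        (\<Sum>l<k. p l) = 1 \<and>
        (\<forall>i<4. \<forall>j<4. \<rho> $$ (i, j) = (\<Sum>l<k. complex_of_real (p l) * kron (A l) (B l) $$ (i, j))))"

definition entanglement_breaking :: "(complex mat \<Rightarrow> complex mat) \<Rightarrow> bool" where
  "entanglement_breaking \<Psi> \<longleftrightarrow>
     (\<forall>\<rho>. density 4 \<rho> \<longrightarrow> separable (id_tensor 2 \<Psi> \<rho>))"

definition UE :: "(complex mat \<Rightarrow> complex mat) set" where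
  "UE = {\<Psi>. quantum_channel \<Psi> \<and> unital \<Psi> \<and> entanglement_breaking \<Psi>}"

text \<open>P'_+ = sum_{i,j} |i><j| (x) |i><j| and the Choi matrix J_\<Psi> = (id (x) \<Psi>)(P'_+).\<close>
definition Pplus :: "complex mat" where
  "Pplus = mat 4 4 (\<lambda>(r, s). if r div 2 = r mod 2 \<and> s div 2 = s mod 2 then 1 else 0)"

definition choi :: "(complex mat \<Rightarrow> complex mat) \<Rightarrow> complex mat" where
  "choi \<Psi> = id_tensor 2 \<Psi> Pplus"

definition pauli :: "nat \<Rightarrow> complex mat" where
  "pauli k = (if k = 1 then mat 2 2 (\<lambda>(i, j). if i \<noteq> j then 1 else 0)
     else if k = 2 then mat 2 2 (\<lambda>(i, j). if i = 0 \<and> j = 1 then - \<i> else if i = 1 \<and> j = 0 then \<i> else 0)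
     else mat 2 2 (\<lambda>(i, j). if i = j then (if i = 0 then 1 else -1) else 0))"

text \<open>Correlation matrix N(X)_{ij} = tr[X (\<sigma>_i (x) \<sigma>_j)], i,j = 1..3, stored 0-indexed.
  The entries are real for Hermitian X; we take the real part.\<close>
definition corr :: "complex mat \<Rightarrow> real mat" where
  "corr X = mat 3 3 (\<lambda>(i, j). Re (mtrace (X * kron (pauli (i + 1)) (pauli (j + 1)))))"

definition opnorm3 :: "real mat \<Rightarrow> real" where
  "opnorm3 M = Sup {sqrt (\<Sum>i<3. (\<Sum>j<3. M $$ (i, j) * x j)\<^sup>2) | x :: nat \<Rightarrow> real.
                      (\<Sum>j<3. (x j)\<^sup>2) = 1}"

end

(* If Psi is entanglement breaking, sigma = J_Psi / 2 = (id (x) Psi)(P'_+ / 2) is separable,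
   sigma = sum_l p_l A_l (x) B_l, and if Psi is moreover trace preserving and unital, both marginals
   of sigma are I / 2.  In Bloch form A_l = (I + a_l . sigma) / 2, B_l = (I + b_l . sigma) / 2 with
   |a_l|, |b_l| <= 1, one has tr[tau (A_l (x) B_l)] = (1 + a_l . r + b_l . s + a_l^T N(tau) b_l) / 4,
   where r and s are the local Bloch vectors of tau.  The marginal conditions say that
   sum_l p_l a_l = sum_l p_l b_l = 0, so the linear terms average out and
   tr[tau J_Psi] = (1 + sum_l p_l a_l^T N(tau) b_l) / 2 <= (1 + ||N(tau)||) / 2. *)

theory Submission
  imports Defs "HOL-Analysis.Convex"
begin

lemma mtrace_mult:
  assumes "A \<in> carrier_mat n n" "B \<in> carrier_mat n n"
  shows "mtrace (A * B) = (\<Sum>i<n. \<Sum>k<n. A $$ (i, k) * B $$ (k, i))"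
  using assms unfolding mtrace_def
  by (auto simp: scalar_prod_def atLeast0LessThan intro!: sum.cong)

lemma mtrace_smult: "A \<in> carrier_mat n n \<Longrightarrow> mtrace (c \<cdot>\<^sub>m A) = c * mtrace A"
  unfolding mtrace_def by (auto simp: sum_distrib_left intro!: sum.cong)

lemma kron_carrier_mat:
  "A \<in> carrier_mat m m \<Longrightarrow> B \<in> carrier_mat n n \<Longrightarrow> kron A B \<in> carrier_mat (m * n) (m * n)"
  unfolding kron_def by auto

lemma index_kron:
  assumes "A \<in> carrier_mat m m" "B \<in> carrier_mat n n" "i < m * n" "j < m * n"
  shows "kron A B $$ (i, j) = A $$ (i div n, j div n) * B $$ (i mod n, j mod n)"
  using assms unfolding kron_def by auto

lemma pauli_carrier_mat: "pauli k \<in> carrier_mat 2 2"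
  unfolding pauli_def by auto

lemma sum_lessThan_2: "(\<Sum>i::nat<2. f i) = f 0 + f 1"
  by (simp add: eval_nat_numeral)

lemma sum_lessThan_3: "(\<Sum>i::nat<3. f i) = f 0 + f 1 + f 2"
  by (simp add: eval_nat_numeral)

lemma sum_lessThan_4: "(\<Sum>i::nat<4. f i) = f 0 + f 1 + f 2 + f 3"
  by (simp add: eval_nat_numeral)

lemma mtrace_2x2: "A \<in> carrier_mat 2 2 \<Longrightarrow> mtrace A = A $$ (0, 0) + A $$ (1, 1)"
  unfolding mtrace_def by (simp add: sum_lessThan_2)

lemma mtrace_pauli: "mtrace (pauli k) = 0"
  unfolding pauli_def mtrace_def by (simp add: eval_nat_numeral)

lemma mtrace_mult_weighted_sum:
  assumes "\<tau> \<in> carrier_mat n n" "X \<in> carrier_mat n n" "\<And>l. l \<in> L \<Longrightarrow> Y l \<in> carrier_mat n n"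
    and "\<And>i j. i < n \<Longrightarrow> j < n \<Longrightarrow> X $$ (i, j) = (\<Sum>l\<in>L. c l * Y l $$ (i, j))"
  shows "mtrace (\<tau> * X) = (\<Sum>l\<in>L. c l * mtrace (\<tau> * Y l))"
  using assms by (simp add: mtrace_mult sum_distrib_left sum.swap[of _ L] mult_ac)

lemma opnorm3_bdd_above:
  "bdd_above {sqrt (\<Sum>i<3. (\<Sum>j<3. M $$ (i, j) * x j)\<^sup>2) | x :: nat \<Rightarrow> real. (\<Sum>j<3. (x j)\<^sup>2) = 1}"
proof (rule bdd_aboveI, clarify)
  fix x :: "nat \<Rightarrow> real" assume x: "(\<Sum>j<3. (x j)\<^sup>2) = 1"
  have "(\<Sum>j<3. M $$ (i, j) * x j)\<^sup>2 \<le> (\<Sum>j<3. (M $$ (i, j))\<^sup>2)" for i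
    using Cauchy_Schwarz_ineq_sum[of "\<lambda>j. M $$ (i, j)" x "{..<3}"] x by simp
  then show "sqrt (\<Sum>i<3. (\<Sum>j<3. M $$ (i, j) * x j)\<^sup>2) \<le> sqrt (\<Sum>i<3. \<Sum>j<3. (M $$ (i, j))\<^sup>2)"
    by (simp add: sum_mono)
qed

lemma opnorm3_upper:
  "(\<Sum>j<3. (x j)\<^sup>2) = 1 \<Longrightarrow> sqrt (\<Sum>i<3. (\<Sum>j<3. M $$ (i, j) * x j)\<^sup>2) \<le> opnorm3 M"
  unfolding opnorm3_def by (rule cSup_upper[OF _ opnorm3_bdd_above]) auto

lemma opnorm3_nonneg: "opnorm3 M \<ge> 0"
proof -
  have "(\<Sum>j<3. ((\<lambda>j::nat. if j = 0 then 1 else 0) j :: real)\<^sup>2) = 1"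
    by (simp add: eval_nat_numeral)
  from opnorm3_upper[OF this] show ?thesis
    by (rule order_trans[rotated]) (simp add: sum_nonneg)
qed

lemma norm_mult_le_opnorm3:
  "sqrt (\<Sum>i<3. (\<Sum>j<3. M $$ (i, j) * b j)\<^sup>2) \<le> sqrt (\<Sum>j<3. (b j)\<^sup>2) * opnorm3 M"
proof (cases "(\<Sum>j<3. (b j)\<^sup>2) = 0")
  case True
  then have "b j = 0" if "j < 3" for j
    using that by (simp add: sum_nonneg_eq_0_iff)
  then show ?thesis by simp
next
  case False
  define nb where "nb = sqrt (\<Sum>j<3. (b j)\<^sup>2)"
  have nb: "nb > 0" using False unfolding nb_def by (simp add: sum_nonneg order_less_le)
  have unit: "(\<Sum>j<3. (b j / nb)\<^sup>2) = 1"
    using nb unfolding nb_def by (simp add: power_divide flip: sum_divide_distrib)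
  have "(\<Sum>j<3. M $$ (i, j) * (b j / nb)) = (\<Sum>j<3. M $$ (i, j) * b j) / nb" for i
    by (simp add: sum_divide_distrib)
  then have "(\<Sum>i<3. (\<Sum>j<3. M $$ (i, j) * b j)\<^sup>2) = nb\<^sup>2 * (\<Sum>i<3. (\<Sum>j<3. M $$ (i, j) * (b j / nb))\<^sup>2)"
    using nb by (simp add: sum_distrib_left power_divide)
  then have "sqrt (\<Sum>i<3. (\<Sum>j<3. M $$ (i, j) * b j)\<^sup>2)
      = nb * sqrt (\<Sum>i<3. (\<Sum>j<3. M $$ (i, j) * (b j / nb))\<^sup>2)"
    using nb by (simp add: real_sqrt_mult)
  also have "\<dots> \<le> nb * opnorm3 M"
    using opnorm3_upper[OF unit] nb by simp
  finally show ?thesis unfolding nb_def .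
qed

lemma bilinear_le_opnorm3:
  assumes "(\<Sum>i<3. (a i)\<^sup>2) \<le> 1" "(\<Sum>j<3. (b j)\<^sup>2) \<le> 1"
  shows "(\<Sum>i<3. \<Sum>j<3. a i * b j * M $$ (i, j)) \<le> opnorm3 M"
proof -
  define y where "y i = (\<Sum>j<3. M $$ (i, j) * b j)" for i
  have "(\<Sum>i<3. \<Sum>j<3. a i * b j * M $$ (i, j)) = (\<Sum>i<3. a i * y i)"
    unfolding y_def by (simp add: sum_distrib_left mult_ac)
  also have "\<dots> \<le> sqrt (\<Sum>i<3. (a i)\<^sup>2) * sqrt (\<Sum>i<3. (y i)\<^sup>2)"
    using Cauchy_Schwarz_ineq_sum[of a y "{..<3}"]
    by (simp add: real_le_rsqrt flip: real_sqrt_mult)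
  also have "\<dots> \<le> sqrt (\<Sum>i<3. (y i)\<^sup>2)"
    using assms(1) by (simp add: mult_left_le_one_le sum_nonneg)
  also have "\<dots> \<le> sqrt (\<Sum>j<3. (b j)\<^sup>2) * opnorm3 M"
    unfolding y_def by (rule norm_mult_le_opnorm3)
  also have "\<dots> \<le> opnorm3 M"
    using assms(2) by (intro mult_left_le_one_le) (simp_all add: opnorm3_nonneg sum_nonneg)
  finally show ?thesis .
qed

definition bloch :: "complex mat \<Rightarrow> nat \<Rightarrow> real" where
  "bloch A i = Re (mtrace (A * pauli (i + 1)))"

definition bloch_state :: "(nat \<Rightarrow> real) \<Rightarrow> complex mat" where
  "bloch_state r = (1/2) \<cdot>\<^sub>m (1\<^sub>m 2 + of_real (r 0) \<cdot>\<^sub>m pauli 1 + of_real (r 1) \<cdot>\<^sub>m pauli 2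
     + of_real (r 2) \<cdot>\<^sub>m pauli 3)"

lemma bloch_state_carrier_mat: "bloch_state r \<in> carrier_mat 2 2"
  unfolding bloch_state_def pauli_def by auto

lemma index_bloch_state:
  "bloch_state r $$ (0, 0) = of_real ((1 + r 2) / 2)"
  "bloch_state r $$ (1, 1) = of_real ((1 - r 2) / 2)"
  "bloch_state r $$ (0, 1) = Complex (r 0 / 2) (- r 1 / 2)"
  "bloch_state r $$ (1, 0) = Complex (r 0 / 2) (r 1 / 2)"
  unfolding bloch_state_def pauli_def by (simp_all add: complex_eq_iff)

lemma bloch_2x2:
  assumes "A \<in> carrier_mat 2 2"
  shows "bloch A 0 = Re (A $$ (0, 1) + A $$ (1, 0))"
    "bloch A 1 = Im (A $$ (1, 0) - A $$ (0, 1))"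
    "bloch A 2 = Re (A $$ (0, 0) - A $$ (1, 1))"
  using assms unfolding bloch_def pauli_def
  by (simp_all add: mtrace_mult[of _ 2] eval_nat_numeral)

lemma density2_entries:
  assumes "density 2 A"
  shows "A \<in> carrier_mat 2 2" "Im (A $$ (0, 0)) = 0" "Im (A $$ (1, 1)) = 0"
    "A $$ (1, 0) = cnj (A $$ (0, 1))" "Re (A $$ (0, 0)) + Re (A $$ (1, 1)) = 1"
    "(cmod (A $$ (0, 1)))\<^sup>2 \<le> Re (A $$ (0, 0)) * Re (A $$ (1, 1))"
proof -
  define \<alpha> \<beta> \<gamma> \<delta> where "\<alpha> = A $$ (0, 0)" "\<beta> = A $$ (0, 1)" "\<gamma> = A $$ (1, 0)" "\<delta> = A $$ (1, 1)"
  have quadratic_form: "(\<Sum>i<2. \<Sum>j<2. cnj (v i) * A $$ (i, j) * v j)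
      = cnj (v 0) * \<alpha> * v 0 + cnj (v 0) * \<beta> * v 1 + cnj (v 1) * \<gamma> * v 0 + cnj (v 1) * \<delta> * v 1"
    for v :: "nat \<Rightarrow> complex"
    unfolding \<alpha>_\<beta>_\<gamma>_\<delta>_def sum_lessThan_2 by simp
  have "Im (\<Sum>i<2. \<Sum>j<2. cnj (v i) * A $$ (i, j) * v j) = 0
      \<and> Re (\<Sum>i<2. \<Sum>j<2. cnj (v i) * A $$ (i, j) * v j) \<ge> 0" for v
    using assms unfolding density_def psd_def Let_def by blast
  then have form: "Im (cnj (v 0) * \<alpha> * v 0 + cnj (v 0) * \<beta> * v 1 + cnj (v 1) * \<gamma> * v 0 + cnj (v 1) * \<delta> * v 1) = 0
      \<and> Re (cnj (v 0) * \<alpha> * v 0 + cnj (v 0) * \<beta> * v 1 + cnj (v 1) * \<gamma> * v 0 + cnj (v 1) * \<delta> * v 1) \<ge> 0"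
    for v :: "nat \<Rightarrow> complex"
    unfolding quadratic_form .
  show carrier: "A \<in> carrier_mat 2 2" using assms unfolding density_def psd_def by blast
  have "mtrace A = 1" using assms unfolding density_def by blast
  then have tr: "\<alpha> + \<delta> = 1"
    using carrier unfolding mtrace_def \<alpha>_\<beta>_\<gamma>_\<delta>_def by (simp add: sum_lessThan_2)
  have \<alpha>: "Im \<alpha> = 0" "Re \<alpha> \<ge> 0" using form[of "\<lambda>i. if i = 0 then 1 else 0"] by simp_all
  have \<delta>: "Im \<delta> = 0" "Re \<delta> \<ge> 0" using form[of "\<lambda>i. if i = 1 then 1 else 0"] by simp_all
  have "Im (\<beta> + \<gamma>) = 0" using form[of "\<lambda>i. 1"] \<alpha> \<delta> by simp
  moreover have "Re (\<beta> - \<gamma>) = 0" using form[of "\<lambda>i. if i = 0 then 1 else \<i>"] \<alpha> \<delta> by simp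
  ultimately have \<gamma>: "\<gamma> = cnj \<beta>" by (simp add: complex_eq_iff)
  define a d where "a = Re \<alpha>" "d = Re \<delta>"
  have ad: "\<alpha> = of_real a" "\<delta> = of_real d" using \<alpha> \<delta> unfolding a_d_def by (simp_all add: complex_eq_iff)
  define D where "D = a * d - (cmod \<beta>)\<^sup>2"
  \<comment> \<open>A maps (-\<beta>, \<alpha>) to (0, det A) and (\<delta>, -\<gamma>) to (det A, 0)\<close>
  have "cnj (- \<beta>) * \<alpha> * (- \<beta>) + cnj (- \<beta>) * \<beta> * \<alpha> + cnj \<alpha> * \<gamma> * (- \<beta>) + cnj \<alpha> * \<delta> * \<alpha>
      = of_real (a * D)"
    unfolding ad \<gamma> D_def of_real_mult of_real_diff complex_norm_square by (simp add: algebra_simps)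
  then have "a * D \<ge> 0" using form[of "\<lambda>i. if i = 0 then - \<beta> else \<alpha>"] by simp
  moreover have "cnj \<delta> * \<alpha> * \<delta> + cnj \<delta> * \<beta> * (- \<gamma>) + cnj (- \<gamma>) * \<gamma> * \<delta> + cnj (- \<gamma>) * \<delta> * (- \<gamma>)
      = of_real (d * D)"
    unfolding ad \<gamma> D_def of_real_mult of_real_diff complex_norm_square by (simp add: algebra_simps)
  then have "d * D \<ge> 0" using form[of "\<lambda>i. if i = 0 then \<delta> else - \<gamma>"] by simp
  moreover have "a + d = 1" using tr unfolding ad by (simp add: complex_eq_iff)
  then have "D = a * D + d * D" by (simp flip: distrib_right)
  ultimately have "(cmod \<beta>)\<^sup>2 \<le> Re \<alpha> * Re \<delta>" unfolding D_def a_d_def by linarith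
  then show "(cmod (A $$ (0, 1)))\<^sup>2 \<le> Re (A $$ (0, 0)) * Re (A $$ (1, 1))"
    unfolding \<alpha>_\<beta>_\<gamma>_\<delta>_def .
  show "Im (A $$ (0, 0)) = 0" "Im (A $$ (1, 1)) = 0" "A $$ (1, 0) = cnj (A $$ (0, 1))"
    "Re (A $$ (0, 0)) + Re (A $$ (1, 1)) = 1"
    using \<alpha> \<delta> \<gamma> tr unfolding \<alpha>_\<beta>_\<gamma>_\<delta>_def by (simp_all add: complex_eq_iff)
qed

lemma density2_eq_bloch_state:
  assumes "density 2 A"
  shows "A = bloch_state (bloch A)"
proof -
  note A = density2_entries[OF assms]
  show ?thesis
  proof (rule eq_matI)
    fix i j assume "i < dim_row (bloch_state (bloch A))" "j < dim_col (bloch_state (bloch A))"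
    then have "i = 0 \<or> i = 1" "j = 0 \<or> j = 1" using bloch_state_carrier_mat[of "bloch A"] by auto
    then show "A $$ (i, j) = bloch_state (bloch A) $$ (i, j)"
      using A by (auto simp: index_bloch_state bloch_2x2 complex_eq_iff simp del: One_nat_def)
  qed (use A(1) bloch_state_carrier_mat in auto)
qed

lemma density2_bloch_norm_le_1:
  assumes "density 2 A"
  shows "(\<Sum>i<3. (bloch A i)\<^sup>2) \<le> 1"
proof -
  note A = density2_entries[OF assms]
  define x y where "x = Re (A $$ (0, 0))" "y = Re (A $$ (1, 1))"
  have "(\<Sum>i<3. (bloch A i)\<^sup>2) = 4 * (cmod (A $$ (0, 1)))\<^sup>2 + (x - y)\<^sup>2"
    using A by (simp add: sum_lessThan_3 bloch_2x2 x_y_def cmod_power2 del: One_nat_def)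
  also have "\<dots> = 1 - 4 * (x * y - (cmod (A $$ (0, 1)))\<^sup>2)"
  proof -
    have "y = 1 - x" using A(5) unfolding x_y_def by simp
    then show ?thesis unfolding \<open>y = 1 - x\<close> by (simp add: power2_eq_square algebra_simps)
  qed
  finally show ?thesis using A(6) unfolding x_y_def by simp
qed

lemma mtrace_mult_kron_2x2:
  assumes "\<tau> \<in> carrier_mat 4 4" "P \<in> carrier_mat 2 2" "Q \<in> carrier_mat 2 2"
  shows "mtrace (\<tau> * kron P Q)
    = (\<Sum>i<4. \<Sum>k<4. \<tau> $$ (i, k) * (P $$ (k div 2, i div 2) * Q $$ (k mod 2, i mod 2)))"
  using assms kron_carrier_mat[OF assms(2,3)] by (simp add: mtrace_mult index_kron)

lemma Re_mtrace_mult_kron_bloch_state: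
  assumes "\<tau> \<in> carrier_mat 4 4"
  shows "Re (mtrace (\<tau> * kron (bloch_state a) (bloch_state b)))
    = (Re (mtrace \<tau>)
       + (\<Sum>i<3. a i * Re (mtrace (\<tau> * kron (pauli (i + 1)) (1\<^sub>m 2))))
       + (\<Sum>j<3. b j * Re (mtrace (\<tau> * kron (1\<^sub>m 2) (pauli (j + 1)))))
       + (\<Sum>i<3. \<Sum>j<3. a i * b j * corr \<tau> $$ (i, j))) / 4"
proof -
  have corr: "corr \<tau> $$ (i, j) = Re (mtrace (\<tau> * kron (pauli (i + 1)) (pauli (j + 1))))"
    if "i < 3" "j < 3" for i j
    using that unfolding corr_def by simp
  have trace: "mtrace \<tau> = (\<Sum>i<4. \<tau> $$ (i, i))"
    using assms unfolding mtrace_def by simp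
  show ?thesis
    unfolding sum_lessThan_3
    by (simp add: corr trace assms mtrace_mult_kron_2x2 pauli_carrier_mat bloch_state_carrier_mat
        sum_lessThan_4 index_bloch_state[unfolded One_nat_def] pauli_def field_simps)
qed

lemma sum_weighted_bloch_eq_0:
  assumes "\<And>l. l \<in> L \<Longrightarrow> A l \<in> carrier_mat 2 2"
    and "\<And>a b. a < 2 \<Longrightarrow> b < 2 \<Longrightarrow> (\<Sum>l\<in>L. of_real (p l) * A l $$ (a, b)) = (if a = b then 1/2 else 0)"
  shows "(\<Sum>l\<in>L. p l * bloch (A l) i) = 0"
proof -
  have "(\<Sum>l\<in>L. p l * bloch (A l) i) = Re (\<Sum>l\<in>L. of_real (p l) * mtrace (A l * pauli (i + 1)))"
    by (simp add: bloch_def)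
  also have "\<dots> = Re (\<Sum>l\<in>L. of_real (p l) * (\<Sum>a<2. \<Sum>b<2. A l $$ (a, b) * pauli (i + 1) $$ (b, a)))"
    by (intro arg_cong[where f = Re] sum.cong refl) (simp add: assms(1) mtrace_mult pauli_carrier_mat)
  also have "\<dots> = Re (\<Sum>a<2. \<Sum>b<2. (\<Sum>l\<in>L. of_real (p l) * A l $$ (a, b)) * pauli (i + 1) $$ (b, a))"
    by (simp add: sum_distrib_left sum_distrib_right sum.swap[of _ L] mult_ac)
  also have "\<dots> = Re (mtrace (pauli (i + 1))) / 2"
    using pauli_carrier_mat[of "i + 1"] by (simp add: assms(2) mtrace_def sum_lessThan_2)
  finally show ?thesis by (simp add: mtrace_pauli)
qed

text \<open>With the index convention of \<^const>\<open>kron\<close>, \<open>partial_trace_1\<close> traces out the first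
  tensor factor and \<open>partial_trace_2\<close> the second one.\<close>

definition partial_trace_1 :: "complex mat \<Rightarrow> complex mat" where
  "partial_trace_1 X = mat 2 2 (\<lambda>(m, n). X $$ (m, n) + X $$ (2 + m, 2 + n))"

definition partial_trace_2 :: "complex mat \<Rightarrow> complex mat" where
  "partial_trace_2 X = mat 2 2 (\<lambda>(a, b). X $$ (2 * a, 2 * b) + X $$ (2 * a + 1, 2 * b + 1))"

lemma partial_trace_1_smult:
  "X \<in> carrier_mat 4 4 \<Longrightarrow> partial_trace_1 (c \<cdot>\<^sub>m X) = c \<cdot>\<^sub>m partial_trace_1 X"
  unfolding partial_trace_1_def by (rule eq_matI) (auto simp: algebra_simps)

lemma partial_trace_2_smult:
  "X \<in> carrier_mat 4 4 \<Longrightarrow> partial_trace_2 (c \<cdot>\<^sub>m X) = c \<cdot>\<^sub>m partial_trace_2 X"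
  unfolding partial_trace_2_def by (rule eq_matI) (auto simp: algebra_simps)

lemma index_partial_trace_1_weighted_kron:
  assumes "\<And>l. l \<in> L \<Longrightarrow> A l \<in> carrier_mat 2 2" "\<And>l. l \<in> L \<Longrightarrow> B l \<in> carrier_mat 2 2"
    and "\<And>i j. i < 4 \<Longrightarrow> j < 4 \<Longrightarrow> X $$ (i, j) = (\<Sum>l\<in>L. c l * kron (A l) (B l) $$ (i, j))"
    and "m < 2" "n < 2"
  shows "partial_trace_1 X $$ (m, n) = (\<Sum>l\<in>L. c l * mtrace (A l) * B l $$ (m, n))"
proof -
  have "partial_trace_1 X $$ (m, n)
      = (\<Sum>l\<in>L. c l * (kron (A l) (B l) $$ (m, n) + kron (A l) (B l) $$ (2 + m, 2 + n)))"
    using assms(3-5) by (simp add: partial_trace_1_def distrib_left sum.distrib)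
  also have "\<dots> = (\<Sum>l\<in>L. c l * mtrace (A l) * B l $$ (m, n))"
    using assms(1,2,4,5) by (intro sum.cong refl) (simp add: index_kron[of _ 2 _ 2] mtrace_2x2 algebra_simps)
  finally show ?thesis .
qed

lemma index_partial_trace_2_weighted_kron:
  assumes "\<And>l. l \<in> L \<Longrightarrow> A l \<in> carrier_mat 2 2" "\<And>l. l \<in> L \<Longrightarrow> B l \<in> carrier_mat 2 2"
    and "\<And>i j. i < 4 \<Longrightarrow> j < 4 \<Longrightarrow> X $$ (i, j) = (\<Sum>l\<in>L. c l * kron (A l) (B l) $$ (i, j))"
    and "a < 2" "b < 2"
  shows "partial_trace_2 X $$ (a, b) = (\<Sum>l\<in>L. c l * mtrace (B l) * A l $$ (a, b))"
proof -
  have "partial_trace_2 X $$ (a, b)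
      = (\<Sum>l\<in>L. c l * (kron (A l) (B l) $$ (2 * a, 2 * b) + kron (A l) (B l) $$ (2 * a + 1, 2 * b + 1)))"
    using assms(3-5) by (simp add: partial_trace_2_def distrib_left sum.distrib)
  also have "\<dots> = (\<Sum>l\<in>L. c l * mtrace (B l) * A l $$ (a, b))"
  proof (intro sum.cong refl)
    fix l assume "l \<in> L"
    moreover have "a = 0 \<or> a = 1" "b = 0 \<or> b = 1" using assms(4,5) by auto
    ultimately show "c l * (kron (A l) (B l) $$ (2 * a, 2 * b) + kron (A l) (B l) $$ (2 * a + 1, 2 * b + 1))
        = c l * mtrace (B l) * A l $$ (a, b)"
      using assms(1,2) by (auto simp: index_kron[of _ 2 _ 2] mtrace_2x2 algebra_simps)
  qed
  finally show ?thesis .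
qed

lemma block2_Pplus:
  "a < 2 \<Longrightarrow> b < 2 \<Longrightarrow> block2 Pplus a b = mat 2 2 (\<lambda>(k, l). if k = a \<and> l = b then 1 else 0)"
  unfolding block2_def Pplus_def by (rule eq_matI) auto

lemma index_choi:
  "i < 4 \<Longrightarrow> j < 4 \<Longrightarrow> choi \<Psi> $$ (i, j) = \<Psi> (block2 Pplus (i div 2) (j div 2)) $$ (i mod 2, j mod 2)"
  unfolding choi_def id_tensor_def by simp

lemma choi_carrier_mat: "choi \<Psi> \<in> carrier_mat 4 4"
  unfolding choi_def id_tensor_def by simp

lemma partial_trace_2_choi:
  assumes "linear_superop \<Psi>" "trace_preserving \<Psi>"
  shows "partial_trace_2 (choi \<Psi>) = 1\<^sub>m 2"
proof (rule eq_matI)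
  fix a b assume "a < dim_row (1\<^sub>m 2 :: complex mat)" "b < dim_col (1\<^sub>m 2 :: complex mat)"
  then have ab: "a < 2" "b < 2" by simp_all
  let ?E = "block2 Pplus a b"
  have E: "?E \<in> carrier_mat 2 2" unfolding block2_def by simp
  have "partial_trace_2 (choi \<Psi>) $$ (a, b) = mtrace (\<Psi> ?E)"
    using ab assms(1) E unfolding linear_superop_def
    by (simp add: partial_trace_2_def index_choi mtrace_2x2)
  also have "\<dots> = mtrace ?E" using assms(2) E unfolding trace_preserving_def by simp
  also have "\<dots> = 1\<^sub>m 2 $$ (a, b)" using ab by (simp add: block2_Pplus mtrace_2x2)
  finally show "partial_trace_2 (choi \<Psi>) $$ (a, b) = 1\<^sub>m 2 $$ (a, b)" .
qed (simp_all add: partial_trace_2_def)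

lemma partial_trace_1_choi:
  assumes "linear_superop \<Psi>" "unital \<Psi>"
  shows "partial_trace_1 (choi \<Psi>) = 1\<^sub>m 2"
proof (rule eq_matI)
  fix m n assume "m < dim_row (1\<^sub>m 2 :: complex mat)" "n < dim_col (1\<^sub>m 2 :: complex mat)"
  then have mn: "m < 2" "n < 2" by simp_all
  have E: "block2 Pplus a b \<in> carrier_mat 2 2" for a b unfolding block2_def by simp
  then have \<Psi>E: "\<Psi> (block2 Pplus a b) \<in> carrier_mat 2 2" for a b
    using assms(1) unfolding linear_superop_def by blast
  have "block2 Pplus 0 0 + block2 Pplus 1 1 = 1\<^sub>m 2"
    by (rule eq_matI) (auto simp: block2_Pplus)
  then have "\<Psi> (block2 Pplus 0 0) + \<Psi> (block2 Pplus 1 1) = 1\<^sub>m 2"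
    using assms E unfolding linear_superop_def unital_def by metis
  moreover have "partial_trace_1 (choi \<Psi>) $$ (m, n)
      = (\<Psi> (block2 Pplus 0 0) + \<Psi> (block2 Pplus 1 1)) $$ (m, n)"
    using mn \<Psi>E by (simp add: partial_trace_1_def index_choi carrier_matD[OF \<Psi>E])
  ultimately show "partial_trace_1 (choi \<Psi>) $$ (m, n) = 1\<^sub>m 2 $$ (m, n)" by simp
qed (simp_all add: partial_trace_1_def)

lemma id_tensor_half_Pplus:
  assumes "linear_superop \<Psi>"
  shows "id_tensor 2 \<Psi> ((1/2) \<cdot>\<^sub>m Pplus) = (1/2) \<cdot>\<^sub>m choi \<Psi>"
proof -
  have "block2 ((1/2) \<cdot>\<^sub>m Pplus) a b = (1/2) \<cdot>\<^sub>m block2 Pplus a b" if "a < 2" "b < 2" for a b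
    using that unfolding block2_def by (rule_tac eq_matI) (auto simp: Pplus_def)
  moreover have "block2 Pplus a b \<in> carrier_mat 2 2" for a b unfolding block2_def by simp
  moreover from this have \<Psi>E: "\<Psi> (block2 Pplus a b) \<in> carrier_mat 2 2" for a b
    using assms unfolding linear_superop_def by blast
  ultimately show ?thesis
    using assms unfolding linear_superop_def choi_def id_tensor_def
    by (rule_tac eq_matI) (auto simp: carrier_matD[OF \<Psi>E])
qed

lemma density_half_Pplus: "density 4 ((1/2) \<cdot>\<^sub>m Pplus)"
proof -
  have "(\<Sum>i<4. \<Sum>j<4. cnj (v i) * ((1/2) \<cdot>\<^sub>m Pplus) $$ (i, j) * v j) = of_real ((cmod (v 0 + v 3))\<^sup>2 / 2)"
    for v :: "nat \<Rightarrow> complex"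
    unfolding of_real_divide complex_norm_square by (simp add: sum_lessThan_4 Pplus_def field_simps)
  note quadratic_form = this
  show ?thesis
    unfolding density_def psd_def Let_def quadratic_form by (simp add: Pplus_def mtrace_def sum_lessThan_4)
qed

lemma separable_half_choi:
  assumes "linear_superop \<Psi>" "entanglement_breaking \<Psi>"
  shows "separable ((1/2) \<cdot>\<^sub>m choi \<Psi>)"
  using assms density_half_Pplus unfolding entanglement_breaking_def
  by (metis id_tensor_half_Pplus)

lemma product_ensemble_bound:
  assumes \<tau>: "\<tau> \<in> carrier_mat 4 4" "mtrace \<tau> = 1"
    and ensemble: "\<And>l. l \<in> L \<Longrightarrow> p l \<ge> 0 \<and> density 2 (A l) \<and> density 2 (B l)" "sum p L = 1"
    and centred: "\<And>i. (\<Sum>l\<in>L. p l * bloch (A l) i) = 0" "\<And>j. (\<Sum>l\<in>L. p l * bloch (B l) j) = 0"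
  shows "(\<Sum>l\<in>L. p l * Re (mtrace (\<tau> * kron (A l) (B l)))) \<le> (1 + opnorm3 (corr \<tau>)) / 4"
proof -
  define r s where "r i = Re (mtrace (\<tau> * kron (pauli (i + 1)) (1\<^sub>m 2)))"
    and "s j = Re (mtrace (\<tau> * kron (1\<^sub>m 2) (pauli (j + 1))))" for i j
  define a b where "a l = bloch (A l)" and "b l = bloch (B l)" for l
  define Q where "Q l = (\<Sum>i<3. \<Sum>j<3. a l i * b l j * corr \<tau> $$ (i, j))" for l
  have expansion: "Re (mtrace (\<tau> * kron (A l) (B l)))
      = (1 + (\<Sum>i<3. a l i * r i) + (\<Sum>j<3. b l j * s j) + Q l) / 4" if "l \<in> L" for l
  proof -
    have AB: "A l = bloch_state (a l)" "B l = bloch_state (b l)"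
      unfolding a_def b_def using ensemble(1)[OF that] by (blast intro: density2_eq_bloch_state)+
    show ?thesis
      unfolding AB Re_mtrace_mult_kron_bloch_state[OF \<tau>(1)] \<tau>(2) r_def s_def Q_def by simp
  qed
  have "(\<Sum>l\<in>L. p l * Re (mtrace (\<tau> * kron (A l) (B l))))
      = (\<Sum>l\<in>L. (p l + p l * (\<Sum>i<3. a l i * r i) + p l * (\<Sum>j<3. b l j * s j) + p l * Q l) / 4)"
    by (rule sum.cong) (simp_all add: expansion algebra_simps)
  also have "\<dots> = (sum p L + (\<Sum>l\<in>L. p l * (\<Sum>i<3. a l i * r i)) + (\<Sum>l\<in>L. p l * (\<Sum>j<3. b l j * s j))
         + (\<Sum>l\<in>L. p l * Q l)) / 4"
    by (simp add: sum.distrib flip: sum_divide_distrib)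
  also have "(\<Sum>l\<in>L. p l * (\<Sum>i<3. a l i * r i)) = (\<Sum>i<3. r i * (\<Sum>l\<in>L. p l * a l i))"
    by (simp add: sum_distrib_left sum.swap[of _ L] mult_ac)
  also have "(\<Sum>l\<in>L. p l * (\<Sum>j<3. b l j * s j)) = (\<Sum>j<3. s j * (\<Sum>l\<in>L. p l * b l j))"
    by (simp add: sum_distrib_left sum.swap[of _ L] mult_ac)
  also have "(sum p L + (\<Sum>i<3. r i * (\<Sum>l\<in>L. p l * a l i)) + (\<Sum>j<3. s j * (\<Sum>l\<in>L. p l * b l j))
         + (\<Sum>l\<in>L. p l * Q l)) / 4 = (1 + (\<Sum>l\<in>L. p l * Q l)) / 4"
    using ensemble(2) centred by (simp add: a_def b_def)
  also have "\<dots> \<le> (1 + opnorm3 (corr \<tau>)) / 4"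
  proof -
    have "(\<Sum>l\<in>L. p l * Q l) \<le> (\<Sum>l\<in>L. p l * opnorm3 (corr \<tau>))"
      using ensemble(1) unfolding Q_def a_def b_def
      by (intro sum_mono mult_left_mono bilinear_le_opnorm3 density2_bloch_norm_le_1) auto
    then show ?thesis using ensemble(2) by (simp flip: sum_distrib_right)
  qed
  finally show ?thesis .
qed

lemma separable_maximally_mixed_marginals_bound:
  assumes \<tau>: "\<tau> \<in> carrier_mat 4 4" "mtrace \<tau> = 1"
    and "separable \<sigma>"
    and marginals: "partial_trace_1 \<sigma> = (1/2) \<cdot>\<^sub>m 1\<^sub>m 2" "partial_trace_2 \<sigma> = (1/2) \<cdot>\<^sub>m 1\<^sub>m 2"
  shows "Re (mtrace (\<tau> * \<sigma>)) \<le> (1 + opnorm3 (corr \<tau>)) / 4"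
proof -
  obtain k :: nat and p A B where "\<sigma> \<in> carrier_mat 4 4"
    and ensemble: "\<forall>l<k. p l \<ge> 0 \<and> density 2 (A l) \<and> density 2 (B l)"
    and p: "(\<Sum>l<k. p l) = 1"
    and \<sigma>: "\<forall>i<4. \<forall>j<4. \<sigma> $$ (i, j) = (\<Sum>l<k. of_real (p l) * kron (A l) (B l) $$ (i, j))"
    using \<open>separable \<sigma>\<close> unfolding separable_def by blast
  have carrier: "A l \<in> carrier_mat 2 2" "B l \<in> carrier_mat 2 2" if "l \<in> {..<k}" for l
    using ensemble that unfolding density_def psd_def by auto
  have trace: "mtrace (A l) = 1" "mtrace (B l) = 1" if "l \<in> {..<k}" for l
    using ensemble that unfolding density_def by auto
  have margin_A: "(\<Sum>l<k. of_real (p l) * A l $$ (a, b)) = (if a = b then 1/2 else 0)"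
    if "a < 2" "b < 2" for a b
  proof -
    have "(\<Sum>l<k. of_real (p l) * A l $$ (a, b)) = (\<Sum>l<k. of_real (p l) * mtrace (B l) * A l $$ (a, b))"
      by (rule sum.cong) (simp_all add: trace)
    also have "\<dots> = partial_trace_2 \<sigma> $$ (a, b)"
      using index_partial_trace_2_weighted_kron[OF carrier \<sigma>[rule_format] that] ..
    finally show ?thesis using marginals(2) that by (simp split: if_splits)
  qed
  note centred_A = sum_weighted_bloch_eq_0[OF carrier(1) margin_A]
  have margin_B: "(\<Sum>l<k. of_real (p l) * B l $$ (a, b)) = (if a = b then 1/2 else 0)"
    if "a < 2" "b < 2" for a b
  proof -
    have "(\<Sum>l<k. of_real (p l) * B l $$ (a, b)) = (\<Sum>l<k. of_real (p l) * mtrace (A l) * B l $$ (a, b))"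
      by (rule sum.cong) (simp_all add: trace)
    also have "\<dots> = partial_trace_1 \<sigma> $$ (a, b)"
      using index_partial_trace_1_weighted_kron[OF carrier \<sigma>[rule_format] that] ..
    finally show ?thesis using marginals(1) that by (simp split: if_splits)
  qed
  note centred_B = sum_weighted_bloch_eq_0[OF carrier(2) margin_B]
  have "Re (mtrace (\<tau> * \<sigma>)) = (\<Sum>l<k. p l * Re (mtrace (\<tau> * kron (A l) (B l))))"
    using mtrace_mult_weighted_sum[OF \<tau>(1) \<open>\<sigma> \<in> carrier_mat 4 4\<close> _ \<sigma>[rule_format]] carrier
      kron_carrier_mat[of _ 2 _ 2] by simp
  also have "\<dots> \<le> (1 + opnorm3 (corr \<tau>)) / 4"
    using product_ensemble_bound[OF \<tau> _ p centred_A centred_B] ensemble by simp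
  finally show ?thesis .
qed

theorem proposition3:
  fixes \<tau> :: "complex mat" and \<Psi> :: "complex mat \<Rightarrow> complex mat"
  assumes "density 4 \<tau>"
    and "\<Psi> \<in> UE"
  shows "Re (mtrace (\<tau> * choi \<Psi>)) \<le> (1 + opnorm3 (corr \<tau>)) / 2"
proof -
  have \<tau>: "\<tau> \<in> carrier_mat 4 4" "mtrace \<tau> = 1"
    using assms(1) unfolding density_def psd_def by auto
  have \<Psi>: "linear_superop \<Psi>" "trace_preserving \<Psi>" "unital \<Psi>" "entanglement_breaking \<Psi>"
    using assms(2) unfolding UE_def quantum_channel_def by auto
  define \<sigma> where "\<sigma> = (1/2) \<cdot>\<^sub>m choi \<Psi>"
  have "separable \<sigma>"
    unfolding \<sigma>_def using \<Psi>(1,4) by (rule separable_half_choi)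
  moreover have "partial_trace_1 \<sigma> = (1/2) \<cdot>\<^sub>m 1\<^sub>m 2" "partial_trace_2 \<sigma> = (1/2) \<cdot>\<^sub>m 1\<^sub>m 2"
    unfolding \<sigma>_def using \<Psi>
    by (simp_all add: choi_carrier_mat partial_trace_1_smult partial_trace_2_smult
        partial_trace_1_choi partial_trace_2_choi)
  ultimately have "Re (mtrace (\<tau> * \<sigma>)) \<le> (1 + opnorm3 (corr \<tau>)) / 4"
    using \<tau> by (rule_tac separable_maximally_mixed_marginals_bound) auto
  moreover have "\<tau> * \<sigma> = (1/2) \<cdot>\<^sub>m (\<tau> * choi \<Psi>)"
    unfolding \<sigma>_def by (rule mult_smult_distrib[OF \<tau>(1) choi_carrier_mat])
  then have "mtrace (\<tau> * \<sigma>) = mtrace (\<tau> * choi \<Psi>) / 2"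
    using mtrace_smult[OF mult_carrier_mat[OF \<tau>(1) choi_carrier_mat]] by simp
  ultimately show ?thesis by simp
qed

end
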